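(* Let $G$ be a group and $S\subset G$ a finite generating set with $S\cap S^{-1}=\emptyset$. Assume that there are no $a,b,c\in S$ with $abc=e$ in $G$, and that $\langle S\mid R\rangle$ with $R=\{a\cdot b\cdot c^{-1}\mid a,b,c\in S,\ abc^{-1}=e \text{ in } G\}$ is a presentation of $G$. Then the action of $G$ on $Flag(G,S)$ by left multiplication is free.
   Context: For a group $G$ and a finite generating set $S\subset G$ with $S\cap S^{-1}=\emptyset$, the Cayley graph $\Gamma(G,S)$ has vertex set $\{v[g]\mid g\in G\}$ and, for each $g\in G$, $s\in S$, a directed edge from $v[g]$ to $v[gs]$; the underlying undirected graph is simple. $Flag(G,S)$ denotes the flag complex of $\Gamma(G,S)$ (a simplex for every finite set of pairwise adjacent vertices), on which $G$ acts by left multiplication. *)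

theory Defs
  imports "HOL-Algebra.Algebra"
begin

(* Words in the free group on a set S: lists of letters (s, True) = s, (s, False) = s^-1 *)
type_synonym 'a letter = "'a \<times> bool"

definition letter_eval :: "('a, 'b) monoid_scheme \<Rightarrow> 'a letter \<Rightarrow> 'a" where
  "letter_eval G l = (if snd l then fst l else inv\<^bsub>G\<^esub> (fst l))"

fun word_eval :: "('a, 'b) monoid_scheme \<Rightarrow> 'a letter list \<Rightarrow> 'a" where
  "word_eval G [] = \<one>\<^bsub>G\<^esub>"
| "word_eval G (l # w) = letter_eval G l \<otimes>\<^bsub>G\<^esub> word_eval G w"

definition words_over :: "'a set \<Rightarrow> 'a letter list set" where
  "words_over S = {w. \<forall>l \<in> set w. fst l \<in> S}"

(* The congruence on words generated by free reductions and insertion/deletion of relators;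
   w ~ [] iff w lies in the normal closure of R in the free group F(S). *)
inductive word_equiv :: "'a set \<Rightarrow> 'a letter list set \<Rightarrow> 'a letter list \<Rightarrow> 'a letter list \<Rightarrow> bool"
  for S R where
  refl: "word_equiv S R w w"
| sym: "word_equiv S R u v \<Longrightarrow> word_equiv S R v u"
| trans: "word_equiv S R u v \<Longrightarrow> word_equiv S R v w \<Longrightarrow> word_equiv S R u w"
| free_red: "x \<in> S \<Longrightarrow> word_equiv S R (u @ [(x, b), (x, \<not> b)] @ v) (u @ v)"
| relator: "r \<in> R \<Longrightarrow> word_equiv S R (u @ r @ v) (u @ v)"

(* <S | R> is a presentation of G: the natural map F(S)/<<R>> -> G is an isomorphism,
   i.e. relators hold in G, the map is onto, and its kernel is the normal closure of R. *)
definition is_presentation :: "('a, 'b) monoid_scheme \<Rightarrow> 'a set \<Rightarrow> 'a letter list set \<Rightarrow> bool" where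
  "is_presentation G S R \<longleftrightarrow>
     R \<subseteq> words_over S \<and>
     (\<forall>r \<in> R. word_eval G r = \<one>\<^bsub>G\<^esub>) \<and>
     word_eval G ` words_over S = carrier G \<and>
     (\<forall>w \<in> words_over S. word_eval G w = \<one>\<^bsub>G\<^esub> \<longrightarrow> word_equiv S R w [])"

definition triangle_relators :: "('a, 'b) monoid_scheme \<Rightarrow> 'a set \<Rightarrow> 'a letter list set" where
  "triangle_relators G S =
     {[(a, True), (b, True), (c, False)] | a b c.
        a \<in> S \<and> b \<in> S \<and> c \<in> S \<and> a \<otimes>\<^bsub>G\<^esub> b \<otimes>\<^bsub>G\<^esub> inv\<^bsub>G\<^esub> c = \<one>\<^bsub>G\<^esub>}"

definition cayley_adj :: "('a, 'b) monoid_scheme \<Rightarrow> 'a set \<Rightarrow> 'a \<Rightarrow> 'a \<Rightarrow> bool" where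
  "cayley_adj G S g h \<longleftrightarrow> g \<in> carrier G \<and> h \<in> carrier G \<and>
     (\<exists>s \<in> S. h = g \<otimes>\<^bsub>G\<^esub> s \<or> g = h \<otimes>\<^bsub>G\<^esub> s)"

definition flag_simplices :: "('a, 'b) monoid_scheme \<Rightarrow> 'a set \<Rightarrow> 'a set set" where
  "flag_simplices G S = {\<sigma>. \<sigma> \<noteq> {} \<and> finite \<sigma> \<and> \<sigma> \<subseteq> carrier G \<and>
     (\<forall>x \<in> \<sigma>. \<forall>y \<in> \<sigma>. x \<noteq> y \<longrightarrow> cayley_adj G S x y)}"

definition left_mult_simplex :: "('a, 'b) monoid_scheme \<Rightarrow> 'a \<Rightarrow> 'a set \<Rightarrow> 'a set" where
  "left_mult_simplex G g \<sigma> = (\<lambda>x. g \<otimes>\<^bsub>G\<^esub> x) ` \<sigma>"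

definition flag_action_free :: "('a, 'b) monoid_scheme \<Rightarrow> 'a set \<Rightarrow> bool" where
  "flag_action_free G S \<longleftrightarrow>
     (\<forall>g \<in> carrier G. \<forall>\<sigma> \<in> flag_simplices G S.
        left_mult_simplex G g \<sigma> = \<sigma> \<longrightarrow> g = \<one>\<^bsub>G\<^esub>)"

end

theory Submission
  imports Defs
begin

text \<open>
  Suppose g fixes a simplex \<sigma> and pick x \<in> \<sigma>. The orbit of x under the powers of g stays
  in the finite set \<sigma>, so g has finite order, and so does h = x^-1 g x. Since g^n x = x h^n and
  the vertices of \<sigma> are pairwise adjacent, every nontrivial power of h lies in S or S^-1.
  If h \<in> S, then inductively every power of h is in S or trivial: h^n \<in> S together with
  (h^(n+1))^-1 \<in> S would give the forbidden triangle h h^n (h^(n+1))^-1 = e. For the order m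
  of h this puts h^(m-1) = h^-1 into S, contradicting S \<inter> S^-1 = {} unless h = e; the case
  h^-1 \<in> S is symmetric. Hence g = e.
\<close>

context group
begin

lemma nat_pow_mult_eq_mult_conj_pow:
  assumes "x \<in> carrier G" "g \<in> carrier G"
  shows "g [^] (n::nat) \<otimes> x = x \<otimes> (inv x \<otimes> g \<otimes> x) [^] n"
proof (induction n)
  case 0
  then show ?case using assms by simp
next
  case (Suc n)
  let ?h = "inv x \<otimes> g \<otimes> x"
  have "x \<otimes> ?h = g \<otimes> x"
    using assms by (metis inv_closed m_assoc m_closed r_inv l_one)
  have "g [^] Suc n \<otimes> x = g \<otimes> (x \<otimes> ?h [^] n)"
    using Suc assms by (metis nat_pow_Suc2 m_assoc nat_pow_closed)
  also have "\<dots> = x \<otimes> ?h \<otimes> ?h [^] n"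
    using assms \<open>x \<otimes> ?h = g \<otimes> x\<close> by (simp add: m_assoc)
  also have "\<dots> = x \<otimes> ?h [^] Suc n"
    using assms by (metis nat_pow_Suc2 m_assoc nat_pow_closed m_closed inv_closed)
  finally show ?case .
qed

lemma nat_pow_mult_mem_of_left_mult_stable:
  assumes "(\<lambda>y. g \<otimes> y) ` \<sigma> = \<sigma>" "x \<in> \<sigma>" "\<sigma> \<subseteq> carrier G" "g \<in> carrier G"
  shows "g [^] (n::nat) \<otimes> x \<in> \<sigma>"
proof (induction n)
  case 0
  then show ?case using assms by auto
next
  case (Suc n)
  have "g [^] Suc n \<otimes> x = g \<otimes> (g [^] n \<otimes> x)"
    using assms by (metis nat_pow_Suc2 m_assoc nat_pow_closed subsetD)
  then show ?case using Suc assms(1) by blast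
qed

lemma ord_pos_of_left_mult_stable:
  assumes "(\<lambda>y. g \<otimes> y) ` \<sigma> = \<sigma>" "finite \<sigma>" "x \<in> \<sigma>" "\<sigma> \<subseteq> carrier G" "g \<in> carrier G"
  shows "ord g > 0"
proof -
  have x: "x \<in> carrier G" using assms by auto
  let ?orbit = "\<lambda>n::nat. g [^] n \<otimes> x"
  have "\<not> inj_on ?orbit {..card \<sigma>}"
  proof
    assume "inj_on ?orbit {..card \<sigma>}"
    moreover have "?orbit ` {..card \<sigma>} \<subseteq> \<sigma>"
      using nat_pow_mult_mem_of_left_mult_stable[OF assms(1,3,4,5)] by blast
    ultimately have "card {..card \<sigma>} \<le> card \<sigma>"
      using card_inj_on_le assms(2) by blast
    then show False by simp
  qed
  then obtain i j where "i < j" "?orbit i = ?orbit j"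
    unfolding inj_on_def by (metis linorder_neqE_nat)
  then have "g [^] i = g [^] j"
    using x assms(5) by simp
  also have "\<dots> = g [^] i \<otimes> g [^] (j - i)"
    using \<open>i < j\<close> assms(5) by (simp add: nat_pow_mult)
  finally have "g [^] i \<otimes> \<one> = g [^] i \<otimes> g [^] (j - i)"
    using assms(5) by simp
  then have "g [^] (j - i) = \<one>"
    using assms(5) by (metis l_cancel nat_pow_closed one_closed)
  then show ?thesis
    using \<open>i < j\<close> ord_eq_0[OF assms(5)] by (metis gr0I zero_less_diff)
qed

lemma cayley_adj_mult_right_iff:
  assumes "S \<subseteq> carrier G" "x \<in> carrier G" "k \<in> carrier G"
  shows "cayley_adj G S x (x \<otimes> k) \<longleftrightarrow> k \<in> S \<or> inv k \<in> S"
proof -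
  have "x \<otimes> k = x \<otimes> s \<longleftrightarrow> k = s" if "s \<in> S" for s
    using that assms by auto
  moreover have "x = x \<otimes> k \<otimes> s \<longleftrightarrow> inv k = s" if "s \<in> S" for s
  proof -
    have s: "s \<in> carrier G" using that assms(1) by auto
    have "x = x \<otimes> k \<otimes> s \<longleftrightarrow> \<one> = k \<otimes> s"
      using assms s by (auto simp: m_assoc)
    also have "\<dots> \<longleftrightarrow> s = inv k \<otimes> \<one>"
      using inv_solve_left[of s k \<one>] assms s by simp
    finally show ?thesis using assms by auto
  qed
  ultimately show ?thesis
    using assms unfolding cayley_adj_def by auto
qed

lemma nat_pow_Suc_in_triangle_free:
  assumes "S \<subseteq> carrier G"
    and no_triangle: "\<not> (\<exists>a \<in> S. \<exists>b \<in> S. \<exists>c \<in> S. a \<otimes> b \<otimes> c = \<one>)"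
    and "u \<in> S"
    and powers: "\<And>n::nat. u [^] n \<noteq> \<one> \<Longrightarrow> u [^] n \<in> S \<or> inv (u [^] n) \<in> S"
  shows "u [^] Suc n \<in> S \<or> u [^] Suc n = \<one>"
proof (induction n)
  case 0
  then show ?case using assms by auto
next
  case (Suc n)
  have u: "u \<in> carrier G" using assms by auto
  show ?case
  proof (rule ccontr)
    assume "\<not> ?case"
    moreover have "u [^] Suc (Suc n) = u \<otimes> u [^] Suc n"
      using u nat_pow_Suc2 by blast
    ultimately have "u [^] Suc n \<in> S"
      using Suc \<open>u \<in> S\<close> u by (metis r_one)
    have "inv (u [^] Suc (Suc n)) \<in> S"
      using \<open>\<not> ?case\<close> powers[of "Suc (Suc n)"] by blast
    moreover have "u \<otimes> u [^] Suc n \<otimes> inv (u [^] Suc (Suc n)) = \<one>"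
      using \<open>u [^] Suc (Suc n) = u \<otimes> u [^] Suc n\<close> u by (metis nat_pow_closed r_inv)
    ultimately show False
      using no_triangle \<open>u \<in> S\<close> \<open>u [^] Suc n \<in> S\<close> by blast
  qed
qed

lemma ord_eq_0_of_powers_in_triangle_free:
  assumes "S \<subseteq> carrier G"
    and disjoint: "\<forall>s \<in> S. inv s \<notin> S"
    and no_triangle: "\<not> (\<exists>a \<in> S. \<exists>b \<in> S. \<exists>c \<in> S. a \<otimes> b \<otimes> c = \<one>)"
    and "u \<in> carrier G" "u \<noteq> \<one>"
    and powers: "\<And>n::nat. u [^] n \<noteq> \<one> \<Longrightarrow> u [^] n \<in> S \<or> inv (u [^] n) \<in> S"
  shows "ord u = 0"
proof -
  have one_notin: "\<one> \<notin> S"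
    using no_triangle by fastforce
  have ord_eq_0_if_in_S: "ord v = 0" if v: "v \<in> S"
    and powers_v: "\<And>n::nat. v [^] n \<noteq> \<one> \<Longrightarrow> v [^] n \<in> S \<or> inv (v [^] n) \<in> S" for v
  proof (rule ccontr)
    assume "ord v \<noteq> 0"
    have vc: "v \<in> carrier G" using v assms(1) by auto
    have "ord v \<noteq> 1"
      using ord_eq_1[OF vc] v one_notin by auto
    then obtain m where m: "ord v = Suc (Suc m)"
      using \<open>ord v \<noteq> 0\<close> by (metis One_nat_def not0_implies_Suc)
    have "v [^] Suc m \<otimes> v = \<one>"
      using pow_ord_eq_1[OF vc] m by (simp del: pow_ord_eq_1)
    then have "inv v = v [^] Suc m"
      using vc inv_equality by simp
    moreover have "v [^] Suc m \<noteq> \<one>"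
      using \<open>inv v = v [^] Suc m\<close> vc v one_notin by (metis inv_eq_1_iff)
    ultimately show False
      using nat_pow_Suc_in_triangle_free[OF assms(1) no_triangle v powers_v] disjoint v by metis
  qed
  have "u \<in> S \<or> inv u \<in> S"
    using powers[of 1] assms(4,5) by simp
  then show ?thesis
  proof
    assume "u \<in> S"
    then show ?thesis using ord_eq_0_if_in_S powers by blast
  next
    assume "inv u \<in> S"
    have "inv u [^] n \<in> S \<or> inv (inv u [^] n) \<in> S" if "inv u [^] n \<noteq> \<one>" for n :: nat
    proof -
      have "inv u [^] n = inv (u [^] n)"
        using assms(4) by (simp add: nat_pow_inv)
      then show ?thesis
        using that powers[of n] assms(4) by (metis inv_eq_1_iff inv_inv nat_pow_closed)
    qed
    then have "ord (inv u) = 0"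
      using ord_eq_0_if_in_S \<open>inv u \<in> S\<close> by blast
    then show ?thesis
      using assms(4) by simp
  qed
qed

lemma flag_action_free_if_triangle_free:
  assumes "S \<subseteq> carrier G"
    and "\<forall>s \<in> S. inv s \<notin> S"
    and "\<not> (\<exists>a \<in> S. \<exists>b \<in> S. \<exists>c \<in> S. a \<otimes> b \<otimes> c = \<one>)"
  shows "flag_action_free G S"
  unfolding flag_action_free_def
proof (intro ballI impI)
  fix g \<sigma>
  assume g: "g \<in> carrier G" and "\<sigma> \<in> flag_simplices G S" and "left_mult_simplex G g \<sigma> = \<sigma>"
  then have stable: "(\<lambda>y. g \<otimes> y) ` \<sigma> = \<sigma>" and "finite \<sigma>" and \<sigma>: "\<sigma> \<subseteq> carrier G"
    and adj: "\<And>y z. y \<in> \<sigma> \<Longrightarrow> z \<in> \<sigma> \<Longrightarrow> y \<noteq> z \<Longrightarrow> cayley_adj G S y z"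
    and "\<sigma> \<noteq> {}"
    unfolding flag_simplices_def left_mult_simplex_def by auto
  then obtain x where "x \<in> \<sigma>" by blast
  then have x: "x \<in> carrier G" using \<sigma> by auto
  define h where "h = inv x \<otimes> g \<otimes> x"
  have h: "h \<in> carrier G" using g x h_def by simp
  have orbit: "g [^] n \<otimes> x = x \<otimes> h [^] n" for n :: nat
    unfolding h_def using nat_pow_mult_eq_mult_conj_pow[OF x g] .
  have "ord g > 0"
    using ord_pos_of_left_mult_stable[OF stable \<open>finite \<sigma>\<close> \<open>x \<in> \<sigma>\<close> \<sigma> g] .
  moreover have "x \<otimes> h [^] ord g = x"
    using orbit[of "ord g"] g x by simp
  ultimately have ord_h: "ord h \<noteq> 0"
    using ord_eq_0[OF h] x h by (metis l_cancel_one nat_pow_closed not_gr0)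
  have powers_h: "h [^] n \<in> S \<or> inv (h [^] n) \<in> S" if "h [^] n \<noteq> \<one>" for n :: nat
  proof -
    have "x \<noteq> x \<otimes> h [^] n"
      using that x h by simp
    moreover have "x \<otimes> h [^] n \<in> \<sigma>"
      using nat_pow_mult_mem_of_left_mult_stable[OF stable \<open>x \<in> \<sigma>\<close> \<sigma> g, of n] orbit[of n]
      by simp
    ultimately have "cayley_adj G S x (x \<otimes> h [^] n)"
      using adj \<open>x \<in> \<sigma>\<close> by blast
    then show ?thesis
      using cayley_adj_mult_right_iff assms(1) x h by simp
  qed
  have "h = \<one>"
  proof (rule ccontr)
    assume "h \<noteq> \<one>"
    then have "ord h = 0"
      by (intro ord_eq_0_of_powers_in_triangle_free[OF assms h] powers_h)
    with ord_h show False ..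
  qed
  then show "g = \<one>"
    using orbit[of 1] g x by simp
qed

end

theorem mainTheorem2:
  fixes G :: "('a, 'b) monoid_scheme" and S :: "'a set"
  assumes "group G"
    and "finite S" and "S \<subseteq> carrier G"
    and "generate G S = carrier G"
    and "\<forall>s \<in> S. inv\<^bsub>G\<^esub> s \<notin> S"
    and "\<not> (\<exists>a \<in> S. \<exists>b \<in> S. \<exists>c \<in> S. a \<otimes>\<^bsub>G\<^esub> b \<otimes>\<^bsub>G\<^esub> c = \<one>\<^bsub>G\<^esub>)"
    and "is_presentation G S (triangle_relators G S)"
  shows "flag_action_free G S"
  using group.flag_action_free_if_triangle_free[OF assms(1,3,5,6)] .

end
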